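(* Let $n\ge2$, $A_0,\dots,A_{n-1}\in\mathbb{R}$, $A_n=1$, $F(a)=\sum_{k=0}^nA_ka^k$, and define $\sigma_k$ by $(-1)^k\sigma_k=A_{n-k}$, $0\le k\le n$. Let $x(a)$ be smooth with $\dot x\neq0$ on an open interval $I\subset(0,\infty)$, $H=\Pi^2+aP_y^2$, $\Pi=\frac a{\dot x}P_a$, $G=\sum_{k=0}^nA_kH^kP_y^{2(n-k)}$, and $$Q_1=\sum_{k=1}^n(-1)^k\beta_k(a)\,H^{n-k}\,\Pi\,P_y^{2k-1},\qquad S_1=Q_1+yG .$$ If the functions $\beta_k$ satisfy $$\dot\beta_1=\dot x,\qquad \dot\beta_{k+1}=-a\dot\beta_k-\tfrac12\beta_k+\sigma_k\dot x\ \ (1\le k\le n-1),\qquad 0=-a\dot\beta_n-\tfrac12\beta_n+\sigma_n\dot x,$$ then $\{H,S_1\}=0$. Moreover, if $F=\prod_{i=1}^n(a-a_i)$ with distinct real $a_i$ and $x=\sum_{i=1}^n\xi_i\Delta_i^{-1/2}$ with $\Delta_i=\epsilon_i(a-a_i)>0$, $\epsilon_i\in\{\pm1\}$, $\xi_i\in\mathbb{R}$, then $\beta_k=\sum_{i=1}^n\frac{\xi_i}{\sqrt{\Delta_i}}\sigma^i_{k-1}$ ($1\le k\le n$) solves this system.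
   Context: A dot denotes $d/da$; $\{\cdot,\cdot\}$ is the canonical Poisson bracket with $(P_a,P_y)$ conjugate to $(a,y)$. For each $i$, $\sigma^i_m$ ($-1\le m\le n$) are defined by $\prod_{l\neq i}(a-a_l)=\sum_{m=0}^{n-1}(-1)^m\sigma^i_ma^{n-1-m}$ with $\sigma^i_{-1}=\sigma^i_n=0$. *)

theory Defs
  imports "HOL-Analysis.Analysis" "HOL-Computational_Algebra.Polynomial"
begin

definition smooth_real_on :: "real set \<Rightarrow> (real \<Rightarrow> real) \<Rightarrow> bool" where
  "smooth_real_on I f \<longleftrightarrow> (\<forall>k. \<forall>a\<in>I. ((deriv ^^ k) f) differentiable (at a))"

text \<open>Canonical Poisson bracket on phase space with coordinates (a, y, P_a, P_y);
  a function on phase space is written f a y Pa Py.\<close>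
definition poisson ::
  "(real \<Rightarrow> real \<Rightarrow> real \<Rightarrow> real \<Rightarrow> real) \<Rightarrow> (real \<Rightarrow> real \<Rightarrow> real \<Rightarrow> real \<Rightarrow> real)
   \<Rightarrow> real \<Rightarrow> real \<Rightarrow> real \<Rightarrow> real \<Rightarrow> real" where
  "poisson f g a y p q =
     deriv (\<lambda>t. f t y p q) a * deriv (\<lambda>t. g a y t q) p
   - deriv (\<lambda>t. f a y t q) p * deriv (\<lambda>t. g t y p q) a
   + deriv (\<lambda>t. f a t p q) y * deriv (\<lambda>t. g a y p t) q
   - deriv (\<lambda>t. f a y p t) q * deriv (\<lambda>t. g a t p q) y"

definition sigmaA :: "nat \<Rightarrow> (nat \<Rightarrow> real) \<Rightarrow> nat \<Rightarrow> real" where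
  "sigmaA n A k = (-1) ^ k * A (n - k)"

definition PiF :: "(real \<Rightarrow> real) \<Rightarrow> real \<Rightarrow> real \<Rightarrow> real" where
  "PiF x a p = a / deriv x a * p"

definition HF :: "(real \<Rightarrow> real) \<Rightarrow> real \<Rightarrow> real \<Rightarrow> real \<Rightarrow> real \<Rightarrow> real" where
  "HF x a y p q = (PiF x a p)^2 + a * q^2"

definition GF :: "nat \<Rightarrow> (nat \<Rightarrow> real) \<Rightarrow> (real \<Rightarrow> real) \<Rightarrow> real \<Rightarrow> real \<Rightarrow> real \<Rightarrow> real \<Rightarrow> real" where
  "GF n A x a y p q = (\<Sum>k=0..n. A k * (HF x a y p q)^k * q^(2*(n-k)))"

definition Q1F :: "nat \<Rightarrow> (nat \<Rightarrow> real \<Rightarrow> real) \<Rightarrow> (real \<Rightarrow> real) \<Rightarrow> real \<Rightarrow> real \<Rightarrow> real \<Rightarrow> real \<Rightarrow> real" where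
  "Q1F n \<beta> x a y p q =
     (\<Sum>k=1..n. (-1)^k * \<beta> k a * (HF x a y p q)^(n-k) * PiF x a p * q^(2*k-1))"

definition S1F :: "nat \<Rightarrow> (nat \<Rightarrow> real) \<Rightarrow> (nat \<Rightarrow> real \<Rightarrow> real) \<Rightarrow> (real \<Rightarrow> real)
   \<Rightarrow> real \<Rightarrow> real \<Rightarrow> real \<Rightarrow> real \<Rightarrow> real" where
  "S1F n A \<beta> x a y p q = Q1F n \<beta> x a y p q + y * GF n A x a y p q"

text \<open>sigma^i_m for the roots r_1..r_n: prod_{l /= i}(a - r_l) = sum_{m=0}^{n-1} (-1)^m sigma^i_m a^{n-1-m},
  and sigma^i_m = 0 for m >= n (the case m = -1 is never needed).\<close>
definition sigmaI :: "nat \<Rightarrow> (nat \<Rightarrow> real) \<Rightarrow> nat \<Rightarrow> nat \<Rightarrow> real" where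
  "sigmaI n r i m = (if m < n then (-1)^m *
      coeff (\<Prod>l\<in>{1..n}-{i}. [:- r l, 1:]) (n - 1 - m) else 0)"

definition beta_system :: "nat \<Rightarrow> (nat \<Rightarrow> real) \<Rightarrow> (real \<Rightarrow> real) \<Rightarrow> (nat \<Rightarrow> real \<Rightarrow> real) \<Rightarrow> real set \<Rightarrow> bool" where
  "beta_system n A x \<beta> I \<longleftrightarrow> (\<forall>a\<in>I.
      deriv (\<beta> 1) a = deriv x a \<and>
      (\<forall>k. 1 \<le> k \<and> k \<le> n - 1 \<longrightarrow>
         deriv (\<beta> (k+1)) a = - a * deriv (\<beta> k) a - \<beta> k a / 2 + sigmaA n A k * deriv x a) \<and>
      0 = - a * deriv (\<beta> n) a - \<beta> n a / 2 + sigmaA n A n * deriv x a)"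

end

theory Submission
  imports Defs
begin

text \<open>Since H does not depend on y and G is a polynomial in H and P_y, we have
  {H, S_1} = {H, Q_1} - 2 a P_y G, and in {H, Q_1} the powers of H drop out, leaving the
  brackets of H with beta_k(a) Pi. Using Pi^2 = H - a P_y^2 these are linear in beta_k and
  beta_k', and the recursion for the beta_k makes their sum telescope to (a / x') 2 x' P_y G,
  which cancels the second term.

  For the explicit solution, g_i = xi_i / sqrt Delta_i satisfies g_i = -2 (a - a_i) g_i', and
  sigma_k = sigma^i_k + a_i sigma^i_(k-1), read off from F = (a - a_i) prod_(l ~= i) (a - a_l),
  reduces the system to this identity root by root.\<close>

lemma beta_recursion_telescope:
  fixes \<beta> b \<sigma> :: "nat \<Rightarrow> real" and a d q H :: real
  assumes n: "n \<ge> 1" and \<sigma>0: "\<sigma> 0 = 1" and b1: "b 1 = d"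
    and step: "\<And>k. 1 \<le> k \<Longrightarrow> k < n \<Longrightarrow> b (k+1) = - a * b k - \<beta> k / 2 + \<sigma> k * d"
    and last: "0 = - a * b n - \<beta> n / 2 + \<sigma> n * d"
  shows "(\<Sum>k=1..n. (-1)^k * q^(2*k-1) * H^(n-k) * ((\<beta> k + 2*a*b k) * q^2 - 2*H*b k))
       = 2 * d * (\<Sum>k=0..n. \<sigma> k * (-1)^k * q^(2*k+1) * H^(n-k))"
proof -
  define u where "u k = (-1::real)^k * q^(2*k+1) * H^(n-k)" for k
  \<comment> \<open>extending \<open>b\<close> by \<open>0\<close> beyond \<open>n\<close> makes the last equation the case \<open>k = n\<close> of \<open>step\<close>\<close>
  define B where "B k = (if k \<le> n then b k else 0)" for k
  define f where "f k = u k * B (k+1)" for k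
  have summand: "(-1)^k * q^(2*k-1) * H^(n-k) * ((\<beta> k + 2*a*b k) * q^2 - 2*H*b k)
      = 2 * d * (\<sigma> k * u k) - 2 * (f k - f (k-1))" if k: "k \<in> {1..n}" for k
  proof -
    obtain j where j: "k = Suc j" using k by (cases k) auto
    have nk: "n - j = Suc (n - k)" using k j by auto
    have "(-1)^k * q^(2*k-1) * H^(n-k) * ((\<beta> k + 2*a*b k) * q^2 - 2*H*b k)
        = u k * (\<beta> k + 2*a*b k) + 2 * u j * b k"
      unfolding u_def j nk by (simp add: algebra_simps power2_eq_square)
    also have "\<dots> = 2 * d * (\<sigma> k * u k) - 2 * (f k - f (k-1))"
    proof -
      have "\<beta> k + 2*a*b k = 2 * \<sigma> k * d - 2 * B (k+1)"
        using k step[of k] last by (cases "k < n") (auto simp: B_def)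
      then have "u k * (\<beta> k + 2*a*b k) = u k * (2 * \<sigma> k * d - 2 * B (k+1))" by simp
      moreover have "b k = B k" using k by (simp add: B_def)
      ultimately show ?thesis unfolding f_def j by (simp add: algebra_simps)
    qed
    finally show ?thesis .
  qed
  have "(\<Sum>k=1..n. (-1)^k * q^(2*k-1) * H^(n-k) * ((\<beta> k + 2*a*b k) * q^2 - 2*H*b k))
      = (\<Sum>k=1..n. 2 * d * (\<sigma> k * u k) - 2 * (f k - f (k-1)))"
    using summand by (rule sum.cong[OF refl])
  also have "\<dots> = 2 * d * (\<Sum>k=1..n. \<sigma> k * u k) - 2 * (\<Sum>k=1..n. f k - f (k-1))"
    by (simp only: sum_subtractf sum_distrib_left[symmetric])
  also have "(\<Sum>k=1..n. f k - f (k-1)) = f n - f 0"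
    using sum_telescope''[of 0 n f] by simp
  also have "f n - f 0 = - d * u 0"
    using n b1 by (simp add: f_def B_def)
  finally show ?thesis
    using \<sigma>0 by (simp add: u_def sum.atLeast_Suc_atMost algebra_simps)
qed

lemma sigmaA_sum_reverse:
  "(\<Sum>k=0..n. sigmaA n A k * (-1)^k * q^(2*k+1) * H^(n-k))
     = q * (\<Sum>k=0..n. A k * H^k * q^(2*(n-k)))"
proof -
  have "(\<Sum>k=0..n. A k * H^k * q^(2*(n-k))) = (\<Sum>k=0..n. A (n-k) * H^(n-k) * q^(2*k))"
    by (rule sum.reindex_bij_witness[where i="\<lambda>k. n-k" and j="\<lambda>k. n-k"]) auto
  then show ?thesis
    by (simp add: sum_distrib_left sigmaA_def power_add power_mult_distrib[symmetric]
        algebra_simps)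
qed

lemma bracket_sum_power_factor:
  fixes h :: "real \<Rightarrow> real \<Rightarrow> real" and \<phi> :: "'i \<Rightarrow> real \<Rightarrow> real \<Rightarrow> real"
  assumes ha: "((\<lambda>t. h t p) has_real_derivative ha) (at a)"
    and hp: "((\<lambda>s. h a s) has_real_derivative hp) (at p)"
    and \<phi>a: "\<And>k. k \<in> K \<Longrightarrow> ((\<lambda>t. \<phi> k t p) has_real_derivative \<phi>a k) (at a)"
    and \<phi>p: "\<And>k. k \<in> K \<Longrightarrow> ((\<lambda>s. \<phi> k a s) has_real_derivative \<phi>p k) (at p)"
  obtains Sa Sp
  where "((\<lambda>t. \<Sum>k\<in>K. \<phi> k t p * h t p ^ m k) has_real_derivative Sa) (at a)"
    and "((\<lambda>s. \<Sum>k\<in>K. \<phi> k a s * h a s ^ m k) has_real_derivative Sp) (at p)"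
    and "ha * Sp - hp * Sa = (\<Sum>k\<in>K. h a p ^ m k * (ha * \<phi>p k - hp * \<phi>a k))"
proof
  show "((\<lambda>t. \<Sum>k\<in>K. \<phi> k t p * h t p ^ m k) has_real_derivative
      (\<Sum>k\<in>K. \<phi>a k * h a p ^ m k + \<phi> k a p * (of_nat (m k) * h a p ^ (m k - 1) * ha))) (at a)"
    by (intro DERIV_sum) (auto intro!: derivative_eq_intros \<phi>a ha)
  show "((\<lambda>s. \<Sum>k\<in>K. \<phi> k a s * h a s ^ m k) has_real_derivative
      (\<Sum>k\<in>K. \<phi>p k * h a p ^ m k + \<phi> k a p * (of_nat (m k) * h a p ^ (m k - 1) * hp))) (at p)"
    by (intro DERIV_sum) (auto intro!: derivative_eq_intros \<phi>p hp)
qed (simp add: sum_distrib_left sum_subtractf[symmetric] algebra_simps)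

lemma poisson_HF:
  fixes g :: "real \<Rightarrow> real \<Rightarrow> real \<Rightarrow> real \<Rightarrow> real"
  assumes "((\<lambda>t. HF x t y p q) has_real_derivative ha) (at a)"
    and "((\<lambda>s. HF x a y s q) has_real_derivative hp) (at p)"
    and "((\<lambda>t. g t y p q) has_real_derivative ga) (at a)"
    and "((\<lambda>s. g a y s q) has_real_derivative gp) (at p)"
    and "((\<lambda>y'. g a y' p q) has_real_derivative gy) (at y)"
  shows "poisson (HF x) g a y p q = ha * gp - hp * ga - 2 * a * q * gy"
proof -
  have "deriv (\<lambda>s. HF x a y p s) q = 2 * a * q"
    by (intro DERIV_imp_deriv) (auto intro!: derivative_eq_intros simp: HF_def)
  moreover have "deriv (\<lambda>y'. HF x a y' p q) y = 0"
    by (simp add: HF_def)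
  ultimately show ?thesis
    using assms unfolding poisson_def by (simp add: DERIV_imp_deriv)
qed

lemma PiF_derivatives:
  fixes x :: "real \<Rightarrow> real"
  assumes "deriv x differentiable (at a)" and "deriv x a \<noteq> 0"
  obtains \<pi>a where "((\<lambda>t. PiF x t p) has_real_derivative \<pi>a) (at a)"
    and "((\<lambda>s. PiF x a s) has_real_derivative a / deriv x a) (at p)"
proof
  have "(deriv x has_real_derivative deriv (deriv x) a) (at a)"
    using assms(1) by (simp add: DERIV_deriv_iff_real_differentiable)
  then show "((\<lambda>t. PiF x t p) has_real_derivative
      (deriv x a - a * deriv (deriv x) a) / (deriv x a)^2 * p) (at a)"
    using assms(2) unfolding PiF_def
    by (auto intro!: derivative_eq_intros simp: power2_eq_square algebra_simps)
  show "((\<lambda>s. PiF x a s) has_real_derivative a / deriv x a) (at p)"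
    using assms(2) unfolding PiF_def by (auto intro!: derivative_eq_intros)
qed

lemma bracket_HF_summand:
  fixes \<pi> \<pi>a \<pi>p \<beta> b a q H :: real
  assumes "\<pi>^2 = H - a * q^2"
  shows "H^m * ((2 * \<pi> * \<pi>a + q^2) * ((-1)^k * \<beta> * \<pi>p * q^(2*k-1))
            - 2 * \<pi> * \<pi>p * ((-1)^k * (b * \<pi> + \<beta> * \<pi>a) * q^(2*k-1)))
       = \<pi>p * ((-1)^k * q^(2*k-1) * H^m * ((\<beta> + 2*a*b) * q^2 - 2*H*b))"
proof -
  have "H^m * ((2 * \<pi> * \<pi>a + q^2) * ((-1)^k * \<beta> * \<pi>p * q^(2*k-1))
            - 2 * \<pi> * \<pi>p * ((-1)^k * (b * \<pi> + \<beta> * \<pi>a) * q^(2*k-1)))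
      = H^m * (\<pi>p * ((-1)^k * q^(2*k-1)) * (\<beta> * q^2 - 2 * \<pi>^2 * b))"
    by (simp add: power2_eq_square algebra_simps)
  also have "\<dots> = \<pi>p * ((-1)^k * q^(2*k-1) * H^m * ((\<beta> + 2*a*b) * q^2 - 2*H*b))"
    unfolding assms by (simp add: algebra_simps)
  finally show ?thesis .
qed

lemma poisson_HF_S1F:
  fixes x :: "real \<Rightarrow> real" and \<beta> :: "nat \<Rightarrow> real \<Rightarrow> real" and a y p q :: real
  assumes ddx: "deriv x differentiable (at a)" and dx0: "deriv x a \<noteq> 0"
    and d\<beta>: "\<And>k. k \<in> {1..n} \<Longrightarrow> \<beta> k differentiable (at a)"
  defines "H \<equiv> HF x a y p q" and "b \<equiv> \<lambda>k. deriv (\<beta> k) a"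
  shows "poisson (HF x) (S1F n A \<beta> x) a y p q
    = a / deriv x a * (\<Sum>k=1..n. (-1)^k * q^(2*k-1) * H^(n-k) * ((\<beta> k a + 2*a*b k) * q^2 - 2*H*b k))
      - 2 * a * q * GF n A x a y p q"
proof -
  obtain \<pi>a where D\<pi>a: "((\<lambda>t. PiF x t p) has_real_derivative \<pi>a) (at a)"
    and D\<pi>p: "((\<lambda>s. PiF x a s) has_real_derivative a / deriv x a) (at p)"
    using PiF_derivatives[OF ddx dx0] .
  define \<pi> where "\<pi> = PiF x a p"
  define \<pi>p where "\<pi>p = a / deriv x a"
  define ha where "ha = 2 * \<pi> * \<pi>a + q^2"
  define hp where "hp = 2 * \<pi> * \<pi>p"
  have D\<beta>: "(\<beta> k has_real_derivative b k) (at a)" if "k \<in> {1..n}" for k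
    using d\<beta>[OF that] by (simp add: b_def DERIV_deriv_iff_real_differentiable)
  have Ha: "((\<lambda>t. HF x t y p q) has_real_derivative ha) (at a)"
    unfolding HF_def ha_def \<pi>_def
    by (auto intro!: derivative_eq_intros D\<pi>a simp: power2_eq_square)
  have Hp: "((\<lambda>s. HF x a y s q) has_real_derivative hp) (at p)"
    unfolding HF_def hp_def \<pi>_def \<pi>p_def
    by (auto intro!: derivative_eq_intros D\<pi>p simp: power2_eq_square)
  define \<phi> where "\<phi> k t s = (-1)^k * \<beta> k t * PiF x t s * q^(2*k-1)" for k t s
  define \<phi>a where "\<phi>a k = (-1)^k * (b k * \<pi> + \<beta> k a * \<pi>a) * q^(2*k-1)" for k
  define \<phi>p where "\<phi>p k = (-1)^k * \<beta> k a * \<pi>p * q^(2*k-1)" for k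
  have D\<phi>a: "((\<lambda>t. \<phi> k t p) has_real_derivative \<phi>a k) (at a)" if "k \<in> {1..n}" for k
    unfolding \<phi>_def \<phi>a_def \<pi>_def
    by (auto intro!: derivative_eq_intros D\<beta>[OF that] D\<pi>a simp: algebra_simps)
  have D\<phi>p: "((\<lambda>s. \<phi> k a s) has_real_derivative \<phi>p k) (at p)" for k
    unfolding \<phi>_def \<phi>p_def \<pi>p_def by (auto intro!: derivative_eq_intros D\<pi>p)
  obtain Qa Qp
    where Qa: "((\<lambda>t. \<Sum>k=1..n. \<phi> k t p * HF x t y p q ^ (n-k)) has_real_derivative Qa) (at a)"
      and Qp: "((\<lambda>s. \<Sum>k=1..n. \<phi> k a s * HF x a y s q ^ (n-k)) has_real_derivative Qp) (at p)"
      and Q: "ha * Qp - hp * Qa = (\<Sum>k=1..n. H ^ (n-k) * (ha * \<phi>p k - hp * \<phi>a k))"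
    unfolding H_def by (rule bracket_sum_power_factor[OF Ha Hp D\<phi>a D\<phi>p])
  obtain Ga Gp
    where Ga: "((\<lambda>t. \<Sum>k=0..n. A k * q^(2*(n-k)) * HF x t y p q ^ k) has_real_derivative Ga) (at a)"
      and Gp: "((\<lambda>s. \<Sum>k=0..n. A k * q^(2*(n-k)) * HF x a y s q ^ k) has_real_derivative Gp) (at p)"
      and G: "ha * Gp - hp * Ga = (\<Sum>k=0..n. H ^ k * (ha * 0 - hp * 0))"
    unfolding H_def by (rule bracket_sum_power_factor[OF Ha Hp DERIV_const DERIV_const])
  have S1F_eq: "S1F n A \<beta> x t y' s q = (\<Sum>k=1..n. \<phi> k t s * HF x t y' s q ^ (n-k))
      + y' * (\<Sum>k=0..n. A k * q^(2*(n-k)) * HF x t y' s q ^ k)" for t y' s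
    by (simp add: S1F_def Q1F_def GF_def \<phi>_def mult_ac)
  have "((\<lambda>y'. S1F n A \<beta> x a y' p q) has_real_derivative GF n A x a y p q) (at y)"
  proof -
    have "(\<lambda>y'. S1F n A \<beta> x a y' p q) = (\<lambda>y'. Q1F n \<beta> x a y p q + y' * GF n A x a y p q)"
      by (simp add: S1F_def Q1F_def GF_def HF_def)
    then show ?thesis by (auto intro!: derivative_eq_intros)
  qed
  moreover have "((\<lambda>t. S1F n A \<beta> x t y p q) has_real_derivative Qa + y * Ga) (at a)"
    unfolding S1F_eq by (intro DERIV_add DERIV_cmult Qa Ga)
  moreover have "((\<lambda>s. S1F n A \<beta> x a y s q) has_real_derivative Qp + y * Gp) (at p)"
    unfolding S1F_eq by (intro DERIV_add DERIV_cmult Qp Gp)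
  ultimately have "poisson (HF x) (S1F n A \<beta> x) a y p q
      = ha * (Qp + y * Gp) - hp * (Qa + y * Ga) - 2 * a * q * GF n A x a y p q"
    by (intro poisson_HF Ha Hp)
  also have "\<dots> = (ha * Qp - hp * Qa) - 2 * a * q * GF n A x a y p q"
    using G by (simp add: algebra_simps)
  also have "ha * Qp - hp * Qa
      = \<pi>p * (\<Sum>k=1..n. (-1)^k * q^(2*k-1) * H^(n-k) * ((\<beta> k a + 2*a*b k) * q^2 - 2*H*b k))"
  proof -
    have "\<pi>^2 = H - a * q^2" by (simp add: H_def HF_def \<pi>_def)
    then have "H ^ (n-k) * (ha * \<phi>p k - hp * \<phi>a k)
        = \<pi>p * ((-1)^k * q^(2*k-1) * H^(n-k) * ((\<beta> k a + 2*a*b k) * q^2 - 2*H*b k))" for k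
      unfolding ha_def hp_def \<phi>a_def \<phi>p_def by (rule bracket_HF_summand)
    then show ?thesis unfolding Q sum_distrib_left by (rule sum.cong[OF refl])
  qed
  finally show ?thesis by (simp add: \<pi>p_def)
qed

lemma poisson_HF_S1F_eq_0:
  fixes x :: "real \<Rightarrow> real" and \<beta> :: "nat \<Rightarrow> real \<Rightarrow> real"
  assumes n: "n \<ge> 1" and An: "A n = 1" and a: "a \<in> I"
    and ddx: "deriv x differentiable (at a)" and dx0: "deriv x a \<noteq> 0"
    and d\<beta>: "\<And>k. k \<in> {1..n} \<Longrightarrow> \<beta> k differentiable (at a)"
    and sys: "beta_system n A x \<beta> I"
  shows "poisson (HF x) (S1F n A \<beta> x) a y p q = 0"
proof -
  define H where "H = HF x a y p q"
  define b where "b k = deriv (\<beta> k) a" for k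
  have "poisson (HF x) (S1F n A \<beta> x) a y p q
    = a / deriv x a * (\<Sum>k=1..n. (-1)^k * q^(2*k-1) * H^(n-k) * ((\<beta> k a + 2*a*b k) * q^2 - 2*H*b k))
      - 2 * a * q * GF n A x a y p q"
    unfolding H_def b_def by (rule poisson_HF_S1F[OF ddx dx0 d\<beta>])
  also have "(\<Sum>k=1..n. (-1)^k * q^(2*k-1) * H^(n-k) * ((\<beta> k a + 2*a*b k) * q^2 - 2*H*b k))
      = 2 * deriv x a * (q * GF n A x a y p q)"
    unfolding GF_def sigmaA_sum_reverse[symmetric] H_def[symmetric]
    by (rule beta_recursion_telescope[OF n])
      (use sys a An in \<open>auto simp: beta_system_def b_def sigmaA_def\<close>)
  finally show ?thesis
    using dx0 by simp
qed

lemma sigmaI_0: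
  assumes "i \<in> {1..n}"
  shows "sigmaI n r i 0 = 1"
proof -
  define P where "P = (\<Prod>l\<in>{1..n}-{i}. [:- r l, 1::real:])"
  have "degree P = (\<Sum>l\<in>{1..n}-{i}. degree [:- r l, 1::real:])"
    unfolding P_def by (rule degree_prod_sum_eq) auto
  also have "\<dots> = n - 1" using assms by simp
  finally have "degree P = n - 1" .
  moreover have "lead_coeff P = 1" unfolding P_def lead_coeff_prod by simp
  ultimately show ?thesis using assms unfolding sigmaI_def P_def[symmetric] by simp
qed

lemma sigmaA_eq_sigmaI:
  fixes A r :: "nat \<Rightarrow> real"
  assumes roots: "\<forall>t. (\<Sum>k=0..n. A k * t^k) = (\<Prod>i=1..n. t - r i)"
    and i: "i \<in> {1..n}" and k: "1 \<le> k" "k \<le> n"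
  shows "sigmaA n A k = sigmaI n r i k + r i * sigmaI n r i (k-1)"
proof -
  define P where "P = (\<Prod>l\<in>{1..n}-{i}. [:- r l, 1::real:])"
  define F where "F = (\<Sum>j\<le>n. monom (A j) j)"
  have "poly F = poly (\<Prod>l\<in>{1..n}. [:- r l, 1::real:])"
    using roots by (auto simp: F_def poly_sum poly_monom poly_prod atLeast0AtMost[symmetric])
  then have "F = (\<Prod>l\<in>{1..n}. [:- r l, 1::real:])" by (simp add: poly_eq_poly_eq_iff)
  also have "\<dots> = [:- r i, 1:] * P" unfolding P_def using i by (simp add: prod.remove)
  finally have F_split: "F = [:- r i, 1:] * P" .
  have A_coeff: "A j = - r i * coeff P j + (if j = 0 then 0 else coeff P (j - 1))"
    if "j \<le> n" for j
  proof -
    have "A j = coeff F j" unfolding F_def using that by (simp add: coeff_sum_monom)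
    then show ?thesis unfolding F_split by (simp add: coeff_pCons')
  qed
  show ?thesis
  proof (cases "k < n")
    case True
    obtain j where j: "k = Suc j" using k by (cases k) auto
    have "coeff P (n - Suc k) = A (n - k) + r i * coeff P (n - k)"
      using A_coeff[of "n - k"] True by (simp add: Suc_diff_Suc)
    then show ?thesis using True unfolding sigmaA_def sigmaI_def P_def[symmetric] j
      by (simp add: algebra_simps)
  next
    case False
    then obtain j where "k = n" "n = Suc j" using k by (cases n) auto
    then show ?thesis using A_coeff[of 0] unfolding sigmaA_def sigmaI_def P_def[symmetric]
      by (simp add: algebra_simps)
  qed
qed

lemma has_real_derivative_divide_sqrt:
  fixes e r \<xi> a :: real
  assumes pos: "e * (a - r) > 0"
  shows "((\<lambda>t. \<xi> / sqrt (e * (t - r))) has_real_derivative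
           - (\<xi> / sqrt (e * (a - r))) / (2 * (a - r))) (at a)"
proof -
  have "e \<noteq> 0" "a - r \<noteq> 0" "sqrt (e * (a - r)) > 0"
    using pos by auto
  then show ?thesis
    using pos by (auto intro!: derivative_eq_intros simp: field_simps)
qed

lemma beta_system_root_sum:
  fixes x :: "real \<Rightarrow> real" and A r :: "nat \<Rightarrow> real" and g D :: "nat \<Rightarrow> real \<Rightarrow> real"
  assumes n: "n \<ge> 1"
    and roots: "\<forall>t. (\<Sum>k=0..n. A k * t^k) = (\<Prod>i=1..n. t - r i)"
    and Dg: "\<And>i a. i \<in> {1..n} \<Longrightarrow> a \<in> I \<Longrightarrow> (g i has_real_derivative D i a) (at a)"
    and g_eq: "\<And>i a. i \<in> {1..n} \<Longrightarrow> a \<in> I \<Longrightarrow> g i a = - 2 * (a - r i) * D i a"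
    and Dx: "\<And>a. a \<in> I \<Longrightarrow> (x has_real_derivative (\<Sum>i=1..n. D i a)) (at a)"
  shows "beta_system n A x (\<lambda>k t. \<Sum>i=1..n. g i t * sigmaI n r i (k - 1)) I"
proof -
  define \<beta> where "\<beta> k t = (\<Sum>i=1..n. g i t * sigmaI n r i (k - 1))" for k t
  have D\<beta>: "(\<beta> k has_real_derivative (\<Sum>i=1..n. D i a * sigmaI n r i (k - 1))) (at a)"
    if "a \<in> I" for k a
    unfolding \<beta>_def by (intro DERIV_sum DERIV_cmult_right Dg that) simp
  have step: "- a * (\<Sum>i=1..n. D i a * sigmaI n r i (k - 1)) - \<beta> k a / 2
      + sigmaA n A k * (\<Sum>i=1..n. D i a) = (\<Sum>i=1..n. D i a * sigmaI n r i k)"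
    if a: "a \<in> I" and k: "1 \<le> k" "k \<le> n" for a k
  proof -
    have "- a * (D i a * sigmaI n r i (k - 1)) - g i a * sigmaI n r i (k - 1) / 2
        + sigmaA n A k * D i a = D i a * sigmaI n r i k" if i: "i \<in> {1..n}" for i
      unfolding g_eq[OF i a] sigmaA_eq_sigmaI[OF roots i k] by (simp add: field_simps)
    then have "(\<Sum>i=1..n. - a * (D i a * sigmaI n r i (k - 1)) - g i a * sigmaI n r i (k - 1) / 2
        + sigmaA n A k * D i a) = (\<Sum>i=1..n. D i a * sigmaI n r i k)"
      by (rule sum.cong[OF refl])
    then show ?thesis
      unfolding \<beta>_def by (simp add: sum_distrib_left sum_subtractf sum.distrib sum_divide_distrib)
  qed
  show ?thesis
    unfolding beta_system_def \<beta>_def[symmetric]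
  proof (intro ballI conjI allI impI)
    fix a assume a: "a \<in> I"
    note derivs = DERIV_imp_deriv[OF D\<beta>[OF a]] DERIV_imp_deriv[OF Dx[OF a]]
    show "deriv (\<beta> 1) a = deriv x a"
      unfolding derivs by (simp add: sigmaI_0)
    show "deriv (\<beta> (k + 1)) a = - a * deriv (\<beta> k) a - \<beta> k a / 2 + sigmaA n A k * deriv x a"
      if k: "1 \<le> k \<and> k \<le> n - 1" for k
    proof -
      from k have "1 \<le> k" "k \<le> n" by linarith+
      then show ?thesis unfolding derivs using step[OF a] by simp
    qed
    show "0 = - a * deriv (\<beta> n) a - \<beta> n a / 2 + sigmaA n A n * deriv x a"
      unfolding derivs using step[OF a, of n] n by (simp add: sigmaI_def)
  qed
qed

lemma beta_system_inverse_sqrt_solution: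
  fixes x :: "real \<Rightarrow> real" and A r \<epsilon> \<xi> :: "nat \<Rightarrow> real"
  assumes n: "n \<ge> 1" and I: "open I"
    and roots: "\<forall>t. (\<Sum>k=0..n. A k * t^k) = (\<Prod>i=1..n. t - r i)"
    and pos: "\<forall>i\<in>{1..n}. \<forall>a\<in>I. \<epsilon> i * (a - r i) > 0"
    and x: "\<forall>a\<in>I. x a = (\<Sum>i=1..n. \<xi> i / sqrt (\<epsilon> i * (a - r i)))"
  shows "let \<beta> = (\<lambda>k a. \<Sum>i=1..n. \<xi> i / sqrt (\<epsilon> i * (a - r i)) * sigmaI n r i (k - 1))
         in (\<forall>a\<in>I. x differentiable (at a) \<and> (\<forall>k\<in>{1..n}. \<beta> k differentiable (at a)))
            \<and> beta_system n A x \<beta> I"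
proof -
  define g where "g i t = \<xi> i / sqrt (\<epsilon> i * (t - r i))" for i t
  define D where "D i t = - g i t / (2 * (t - r i))" for i t
  have Dg: "(g i has_real_derivative D i a) (at a)" if "i \<in> {1..n}" "a \<in> I" for i a
    unfolding g_def D_def using pos that by (intro has_real_derivative_divide_sqrt) auto
  have g_eq: "g i a = - 2 * (a - r i) * D i a" if "i \<in> {1..n}" "a \<in> I" for i a
  proof -
    have "a - r i \<noteq> 0" using pos that by fastforce
    then show ?thesis unfolding D_def by (simp add: field_simps)
  qed
  have Dx: "(x has_real_derivative (\<Sum>i=1..n. D i a)) (at a)" if a: "a \<in> I" for a
  proof (rule has_field_derivative_transform_within_open[OF _ I a])
    show "((\<lambda>t. \<Sum>i=1..n. g i t) has_real_derivative (\<Sum>i=1..n. D i a)) (at a)"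
      by (intro DERIV_sum Dg a)
    show "\<And>t. t \<in> I \<Longrightarrow> (\<Sum>i=1..n. g i t) = x t" using x by (simp add: g_def)
  qed
  have "(\<lambda>t. \<Sum>i=1..n. g i t * sigmaI n r i (k - 1)) differentiable (at a)" if "a \<in> I" for k a
  proof -
    have "((\<lambda>t. \<Sum>i=1..n. g i t * sigmaI n r i (k - 1)) has_real_derivative
        (\<Sum>i=1..n. D i a * sigmaI n r i (k - 1))) (at a)"
      using that by (intro DERIV_sum DERIV_cmult_right Dg) auto
    then show ?thesis using real_differentiable_def by blast
  qed
  moreover have "x differentiable (at a)" if "a \<in> I" for a
    using Dx[OF that] real_differentiable_def by blast
  ultimately show ?thesis
    unfolding Let_def g_def[symmetric]
    using beta_system_root_sum[OF n roots Dg g_eq Dx] by blast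
qed

theorem proposition10:
  fixes n :: nat and A :: "nat \<Rightarrow> real" and I :: "real set"
  assumes n2: "n \<ge> 2"
    and An: "A n = 1"
    and I_open: "open I" and I_int: "is_interval I" and I_ne: "I \<noteq> {}"
    and I_pos: "I \<subseteq> {0<..}"
  shows
   "(\<forall>(x :: real \<Rightarrow> real) (\<beta> :: nat \<Rightarrow> real \<Rightarrow> real).
        smooth_real_on I x \<and> (\<forall>a\<in>I. deriv x a \<noteq> 0)
      \<and> (\<forall>k\<in>{1..n}. \<forall>a\<in>I. \<beta> k differentiable (at a))
      \<and> beta_system n A x \<beta> I
      \<longrightarrow> (\<forall>a\<in>I. \<forall>y p q. poisson (HF x) (S1F n A \<beta> x) a y p q = 0))
  \<and> (\<forall>(x :: real \<Rightarrow> real) (r :: nat \<Rightarrow> real) (\<epsilon> :: nat \<Rightarrow> real) (\<xi> :: nat \<Rightarrow> real).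
        (\<forall>t. (\<Sum>k=0..n. A k * t^k) = (\<Prod>i=1..n. t - r i))
      \<and> inj_on r {1..n}
      \<and> (\<forall>i\<in>{1..n}. \<epsilon> i = 1 \<or> \<epsilon> i = -1)
      \<and> (\<forall>i\<in>{1..n}. \<forall>a\<in>I. \<epsilon> i * (a - r i) > 0)
      \<and> (\<forall>a\<in>I. x a = (\<Sum>i=1..n. \<xi> i / sqrt (\<epsilon> i * (a - r i))))
      \<longrightarrow> (let \<beta> = (\<lambda>k a. \<Sum>i=1..n. \<xi> i / sqrt (\<epsilon> i * (a - r i)) * sigmaI n r i (k - 1))
           in (\<forall>a\<in>I. x differentiable (at a) \<and> (\<forall>k\<in>{1..n}. \<beta> k differentiable (at a)))
              \<and> beta_system n A x \<beta> I))"
proof (intro conjI allI impI ballI)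
  fix x :: "real \<Rightarrow> real" and \<beta> :: "nat \<Rightarrow> real \<Rightarrow> real" and a y p q
  assume hyps: "smooth_real_on I x \<and> (\<forall>a\<in>I. deriv x a \<noteq> 0)
      \<and> (\<forall>k\<in>{1..n}. \<forall>a\<in>I. \<beta> k differentiable (at a)) \<and> beta_system n A x \<beta> I"
    and a: "a \<in> I"
  have "((deriv ^^ 1) x) differentiable (at a)"
    using hyps a unfolding smooth_real_on_def by blast
  then have "deriv x differentiable (at a)" by simp
  moreover have "n \<ge> 1" using n2 by simp
  ultimately show "poisson (HF x) (S1F n A \<beta> x) a y p q = 0"
    using hyps a An by (intro poisson_HF_S1F_eq_0[where I=I]) auto
next
  fix x :: "real \<Rightarrow> real" and r \<epsilon> \<xi> :: "nat \<Rightarrow> real"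
  assume "(\<forall>t. (\<Sum>k=0..n. A k * t^k) = (\<Prod>i=1..n. t - r i))
      \<and> inj_on r {1..n}
      \<and> (\<forall>i\<in>{1..n}. \<epsilon> i = 1 \<or> \<epsilon> i = -1)
      \<and> (\<forall>i\<in>{1..n}. \<forall>a\<in>I. \<epsilon> i * (a - r i) > 0)
      \<and> (\<forall>a\<in>I. x a = (\<Sum>i=1..n. \<xi> i / sqrt (\<epsilon> i * (a - r i))))"
  then show "let \<beta> = (\<lambda>k a. \<Sum>i=1..n. \<xi> i / sqrt (\<epsilon> i * (a - r i)) * sigmaI n r i (k - 1))
           in (\<forall>a\<in>I. x differentiable (at a) \<and> (\<forall>k\<in>{1..n}. \<beta> k differentiable (at a)))
              \<and> beta_system n A x \<beta> I"
    using n2 I_open by (intro beta_system_inverse_sqrt_solution) auto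
qed

end
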